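(* Let $c\in\mathbb{C}$ and consider the complex quadratic system \[ \dot z = z+\tfrac{1}{16}\big(21cz^2-6czw+cw^2\big),\qquad \dot w = -w+\tfrac{1}{16}\big(-27cz^2+18czw-7cw^2\big). \] Put \[ l_1=z+\tfrac{3c}{16}z^2+\tfrac{c}{8}zw+\tfrac{c}{48}w^2,\quad l_2=w+\tfrac{9c}{16}z^2+\tfrac{3c}{8}zw+\tfrac{c}{16}w^2, \] \[ l_3=1+3cz+\tfrac{27c^2}{8}z^2+cw-\tfrac{3c^2}{4}zw+\tfrac{3c^2}{8}w^2,\quad l_4=1+\tfrac{3c}{2}z+\tfrac{9c^2}{16}z^2+\tfrac{c}{2}w+\tfrac{3c^2}{8}zw+\tfrac{c^2}{16}w^2 . \] Then $l_1,\dots,l_4$ are Darboux factors of the system and the analytic change of coordinates $z_1=l_1l_3l_4^{-3}$, $w_1=l_2l_3l_4^{-3}$ (defined near the origin) transforms the system into $\dot z_1=z_1$, $\dot w_1=-w_1$.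
   Context: A Darboux factor of a system $\dot z = F(z,w)$, $\dot w = G(z,w)$ is a polynomial $f(z,w)$ such that $f_zF+f_wG=Kf$ for some polynomial $K$, called its cofactor. *)

theory Defs
  imports "HOL-Analysis.Analysis" "HOL-Computational_Algebra.Polynomial"
begin

text \<open>Polynomials in two complex variables z, w are represented as
  complex poly poly: a polynomial in z whose coefficients are polynomials in w.\<close>

type_synonym bipoly = "complex poly poly"

definition Zv :: bipoly where "Zv = [:0, 1:]"
definition Wv :: bipoly where "Wv = [:[:0, 1:]:]"
definition Cst :: "complex \<Rightarrow> bipoly" where "Cst k = [:[:k:]:]"

definition beval :: "bipoly \<Rightarrow> complex \<Rightarrow> complex \<Rightarrow> complex" where
  "beval p z w = poly (map_poly (\<lambda>q. poly q w) p) z"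

definition dZ :: "bipoly \<Rightarrow> bipoly" where "dZ p = pderiv p"
definition dW :: "bipoly \<Rightarrow> bipoly" where "dW p = map_poly pderiv p"

definition darboux_factor :: "bipoly \<Rightarrow> bipoly \<Rightarrow> bipoly \<Rightarrow> bool" where
  "darboux_factor F G f \<longleftrightarrow> (\<exists>K. dZ f * F + dW f * G = K * f)"

definition sysF :: "complex \<Rightarrow> bipoly" where
  "sysF c = Zv + Cst (c/16) * (Cst 21 * Zv^2 - Cst 6 * Zv * Wv + Wv^2)"
definition sysG :: "complex \<Rightarrow> bipoly" where
  "sysG c = - Wv + Cst (c/16) * (- Cst 27 * Zv^2 + Cst 18 * Zv * Wv - Cst 7 * Wv^2)"

definition l1 :: "complex \<Rightarrow> bipoly" where
  "l1 c = Zv + Cst (3*c/16) * Zv^2 + Cst (c/8) * Zv * Wv + Cst (c/48) * Wv^2"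
definition l2 :: "complex \<Rightarrow> bipoly" where
  "l2 c = Wv + Cst (9*c/16) * Zv^2 + Cst (3*c/8) * Zv * Wv + Cst (c/16) * Wv^2"
definition l3 :: "complex \<Rightarrow> bipoly" where
  "l3 c = 1 + Cst (3*c) * Zv + Cst (27*c^2/8) * Zv^2 + Cst c * Wv
          - Cst (3*c^2/4) * Zv * Wv + Cst (3*c^2/8) * Wv^2"
definition l4 :: "complex \<Rightarrow> bipoly" where
  "l4 c = 1 + Cst (3*c/2) * Zv + Cst (9*c^2/16) * Zv^2 + Cst (c/2) * Wv
          + Cst (3*c^2/8) * Zv * Wv + Cst (c^2/16) * Wv^2"

definition Z1 :: "complex \<Rightarrow> complex \<Rightarrow> complex \<Rightarrow> complex" where
  "Z1 c z w = beval (l1 c) z w * beval (l3 c) z w / (beval (l4 c) z w)^3"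
definition W1 :: "complex \<Rightarrow> complex \<Rightarrow> complex \<Rightarrow> complex" where
  "W1 c z w = beval (l2 c) z w * beval (l3 c) z w / (beval (l4 c) z w)^3"

end

theory Submission
  imports Defs
begin

text \<open>The four quadratics have the linear cofactors K1 = 1 + 3c/2 z - c/2 w,
  K2 = -1 + 3c/2 z - c/2 w, K3 = 3c z - c w and K4 = 3c/2 z - c/2 w.
  The Lie derivative along the system is a derivation, so wherever l4 does not vanish,
  l1 l3 / l4^3 and l2 l3 / l4^3 are eigenfunctions of it with eigenvalues
  K1 + K3 - 3 K4 = 1 and K2 + K3 - 3 K4 = -1. Their Jacobian at the origin is the identity,
  so by the inverse function theorem they are coordinates near the origin.\<close>

lemma beval_pCons: "beval (pCons a p) z w = poly a w + z * beval p z w"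
  by (simp add: beval_def map_poly_pCons)

lemma beval_eq_poly_poly: "beval p z w = poly (poly p [:z:]) w"
  by (induction p) (simp_all add: beval_pCons, simp add: beval_def)

lemma beval_add [simp]: "beval (p + q) z w = beval p z w + beval q z w"
  and beval_mult [simp]: "beval (p * q) z w = beval p z w * beval q z w"
  and beval_diff [simp]: "beval (p - q) z w = beval p z w - beval q z w"
  and beval_uminus [simp]: "beval (- p) z w = - beval p z w"
  and beval_power [simp]: "beval (p ^ n) z w = beval p z w ^ n"
  and beval_0 [simp]: "beval 0 z w = 0"
  and beval_1 [simp]: "beval 1 z w = 1"
  and beval_Zv [simp]: "beval Zv z w = z"
  and beval_Wv [simp]: "beval Wv z w = w"
  and beval_Cst [simp]: "beval (Cst k) z w = k"
  and beval_numeral [simp]: "beval (numeral m) z w = numeral m"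
  by (simp_all add: beval_eq_poly_poly Zv_def Wv_def Cst_def poly_power)

lemma beval_eqI:
  assumes "\<And>z w. beval p z w = beval q z w"
  shows "p = q"
proof -
  have "poly (coeff (p - q) i) w = 0" for i w
  proof -
    have "map_poly (\<lambda>r. poly r w) (p - q) = 0"
      using assms by (simp add: poly_eq_poly_eq_iff[symmetric] beval_def[symmetric] fun_eq_iff)
    then show ?thesis by (metis coeff_0 coeff_map_poly poly_0)
  qed
  then have "p - q = 0"
    by (metis poly_all_0_iff_0 poly_eqI coeff_0)
  then show ?thesis by simp
qed

definition beval_pair :: "bipoly \<Rightarrow> complex \<times> complex \<Rightarrow> complex" where
  "beval_pair p x = beval p (fst x) (snd x)"

lemma beval_pair_Pair [simp]: "beval_pair p (z, w) = beval p z w"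
  by (simp add: beval_pair_def)

lemma has_derivative_beval_pair:
  "(beval_pair p has_derivative
     (\<lambda>v. beval_pair (dZ p) x * fst v + beval_pair (dW p) x * snd v)) (at x)"
  unfolding beval_pair_def[abs_def]
proof (induction p)
  case 0
  then show ?case by (simp add: dZ_def dW_def)
next
  case (pCons a p)
  have "((\<lambda>y. poly a (snd y)) has_derivative (\<lambda>v. poly (pderiv a) (snd x) * snd v)) (at x)"
    using has_derivative_compose[OF has_derivative_snd[OF has_derivative_ident]
        poly_DERIV[of a "snd x", unfolded has_field_derivative_def]]
    by (simp add: o_def mult.commute)
  then have "((\<lambda>y. poly a (snd y) + fst y * beval p (fst y) (snd y)) has_derivative
     (\<lambda>v. poly (pderiv a) (snd x) * snd v + (fst x * (beval (dZ p) (fst x) (snd x) * fst v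
        + beval (dW p) (fst x) (snd x) * snd v) + fst v * beval p (fst x) (snd x)))) (at x)"
    by (intro has_derivative_add has_derivative_mult has_derivative_fst[OF has_derivative_ident]
        pCons.IH)
  then show ?case
    by (simp add: beval_pCons dZ_def dW_def pderiv_pCons map_poly_pCons algebra_simps)
qed

lemma isCont_beval_pair [continuous_intros]: "isCont (beval_pair p) x"
  using has_derivative_beval_pair has_derivative_continuous by blast

lemma has_field_derivative_beval_w [derivative_intros]:
  "D = beval (dW p) z w \<Longrightarrow> ((\<lambda>v. beval p z v) has_field_derivative D) (at w within s)"
proof -
  have "((\<lambda>v. (z, v)) has_derivative (\<lambda>h. (0, h))) (at w within s)"
    by (auto intro!: derivative_eq_intros)
  from has_derivative_compose[OF this has_derivative_beval_pair]
  show "D = beval (dW p) z w \<Longrightarrow> ?thesis"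
    by (simp add: has_field_derivative_def o_def mult_commute_abs)
qed

lemma dW_eqI:
  assumes "\<And>z w. ((\<lambda>v. beval p z v) has_field_derivative beval q z w) (at w)"
  shows "dW p = q"
  by (rule beval_eqI, rule DERIV_unique[OF has_field_derivative_beval_w assms]) simp

lemma dW_add [simp]: "dW (p + q) = dW p + dW q"
  and dW_diff [simp]: "dW (p - q) = dW p - dW q"
  and dW_uminus [simp]: "dW (- p) = - dW p"
  and dW_mult [simp]: "dW (p * q) = dW p * q + p * dW q"
  by (rule dW_eqI; auto intro!: derivative_eq_intros)+

lemma dW_1 [simp]: "dW 1 = 0"
  and dW_Cst [simp]: "dW (Cst k) = 0"
  and dW_Zv [simp]: "dW Zv = 0"
  and dW_Wv [simp]: "dW Wv = 1"
  by (rule dW_eqI; auto intro!: derivative_eq_intros)+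

lemma dZ_add [simp]: "dZ (p + q) = dZ p + dZ q"
  and dZ_diff [simp]: "dZ (p - q) = dZ p - dZ q"
  and dZ_uminus [simp]: "dZ (- p) = - dZ p"
  and dZ_mult [simp]: "dZ (p * q) = dZ p * q + p * dZ q"
  and dZ_1 [simp]: "dZ 1 = 0"
  and dZ_Cst [simp]: "dZ (Cst k) = 0"
  and dZ_Zv [simp]: "dZ Zv = 1"
  and dZ_Wv [simp]: "dZ Wv = 0"
  by (simp_all add: dZ_def pderiv_add pderiv_diff pderiv_minus pderiv_mult Cst_def Zv_def Wv_def
      pderiv_pCons)

definition lie_deriv :: "bipoly \<Rightarrow> bipoly \<Rightarrow> bipoly \<Rightarrow> bipoly" where
  "lie_deriv F G f = dZ f * F + dW f * G"

lemma lie_deriv_mult: "lie_deriv F G (f * g) = lie_deriv F G f * g + f * lie_deriv F G g"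
  by (simp add: lie_deriv_def algebra_simps)

lemma darboux_factorI: "lie_deriv F G f = K * f \<Longrightarrow> darboux_factor F G f"
  unfolding darboux_factor_def lie_deriv_def by blast

lemma lie_deriv_l1:
  "lie_deriv (sysF c) (sysG c) (l1 c) = (1 + Cst (3*c/2) * Zv - Cst (c/2) * Wv) * l1 c"
  by (rule beval_eqI)
    (simp add: lie_deriv_def sysF_def sysG_def l1_def power2_eq_square field_simps; algebra)

lemma lie_deriv_l2:
  "lie_deriv (sysF c) (sysG c) (l2 c) = (- 1 + Cst (3*c/2) * Zv - Cst (c/2) * Wv) * l2 c"
  by (rule beval_eqI)
    (simp add: lie_deriv_def sysF_def sysG_def l2_def power2_eq_square field_simps; algebra)

lemma lie_deriv_l3:
  "lie_deriv (sysF c) (sysG c) (l3 c) = (Cst (3*c) * Zv - Cst c * Wv) * l3 c"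
  by (rule beval_eqI)
    (simp add: lie_deriv_def sysF_def sysG_def l3_def power2_eq_square field_simps; algebra)

lemma lie_deriv_l4:
  "lie_deriv (sysF c) (sysG c) (l4 c) = (Cst (3*c/2) * Zv - Cst (c/2) * Wv) * l4 c"
  by (rule beval_eqI)
    (simp add: lie_deriv_def sysF_def sysG_def l4_def power2_eq_square field_simps; algebra)

lemma lie_deriv_l1_l3:
  "lie_deriv (sysF c) (sysG c) (l1 c * l3 c)
     = (1 + Cst (9*c/2) * Zv - Cst (3*c/2) * Wv) * (l1 c * l3 c)"
  by (rule beval_eqI) (simp add: lie_deriv_mult lie_deriv_l1 lie_deriv_l3 algebra_simps)

lemma lie_deriv_l2_l3:
  "lie_deriv (sysF c) (sysG c) (l2 c * l3 c)
     = (- 1 + Cst (9*c/2) * Zv - Cst (3*c/2) * Wv) * (l2 c * l3 c)"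
  by (rule beval_eqI) (simp add: lie_deriv_mult lie_deriv_l2 lie_deriv_l3 algebra_simps)

definition quot_partial ::
    "(bipoly \<Rightarrow> bipoly) \<Rightarrow> bipoly \<Rightarrow> bipoly \<Rightarrow> nat \<Rightarrow> complex \<times> complex \<Rightarrow> complex"
  where "quot_partial D n h k x =
    (beval_pair (D n) x * beval_pair h x - of_nat k * beval_pair n x * beval_pair (D h) x)
      / beval_pair h x ^ Suc k"

lemma has_derivative_quotient:
  assumes "beval_pair h x \<noteq> 0"
  shows "((\<lambda>y. beval_pair n y / beval_pair h y ^ k) has_derivative
           (\<lambda>v. quot_partial dZ n h k x * fst v + quot_partial dW n h k x * snd v)) (at x)"
proof (rule has_derivative_eq_rhs[OF has_derivative_divide'[OF has_derivative_beval_pair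
      has_derivative_power[OF has_derivative_beval_pair]]])
  show "beval_pair h x ^ k \<noteq> 0"
    using assms by simp
  show "(\<lambda>v. ((beval_pair (dZ n) x * fst v + beval_pair (dW n) x * snd v) * beval_pair h x ^ k
          - beval_pair n x * (of_nat k * (beval_pair (dZ h) x * fst v + beval_pair (dW h) x * snd v)
            * beval_pair h x ^ (k - 1))) / (beval_pair h x ^ k * beval_pair h x ^ k))
      = (\<lambda>v. quot_partial dZ n h k x * fst v + quot_partial dW n h k x * snd v)"
    using assms by (cases k) (auto simp: fun_eq_iff quot_partial_def field_simps)
qed

lemma isCont_quot_partial [continuous_intros]:
  "beval_pair h x \<noteq> 0 \<Longrightarrow> isCont (quot_partial D n h k) x"
  unfolding quot_partial_def[abs_def] by (intro continuous_intros) auto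

lemma has_field_derivative_quotient_z:
  assumes "beval h z w \<noteq> 0"
  shows "((\<lambda>u. beval n u w / beval h u w ^ k) has_field_derivative quot_partial dZ n h k (z, w)) (at z)"
proof -
  have "((\<lambda>u. (u, w)) has_derivative (\<lambda>t. (t, 0))) (at z)"
    by (auto intro!: derivative_eq_intros)
  from has_derivative_compose[OF this has_derivative_quotient[of h "(z, w)" n k]] assms
  show ?thesis by (simp add: has_field_derivative_def o_def mult_commute_abs)
qed

lemma has_field_derivative_quotient_w:
  assumes "beval h z w \<noteq> 0"
  shows "((\<lambda>v. beval n z v / beval h z v ^ k) has_field_derivative quot_partial dW n h k (z, w)) (at w)"
proof -
  have "((\<lambda>v. (z, v)) has_derivative (\<lambda>t. (0, t))) (at w)"
    by (auto intro!: derivative_eq_intros)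
  from has_derivative_compose[OF this has_derivative_quotient[of h "(z, w)" n k]] assms
  show ?thesis by (simp add: has_field_derivative_def o_def mult_commute_abs)
qed

lemma lie_deriv_quotient:
  assumes h: "beval_pair h x \<noteq> 0"
    and n_cof: "lie_deriv F G n = K * n" and h_cof: "lie_deriv F G h = L * h"
  shows "quot_partial dZ n h k x * beval_pair F x + quot_partial dW n h k x * beval_pair G x
       = (beval_pair K x - of_nat k * beval_pair L x) * (beval_pair n x / beval_pair h x ^ k)"
proof -
  have lie_at: "beval_pair (dZ p) x * beval_pair F x + beval_pair (dW p) x * beval_pair G x
        = beval_pair (lie_deriv F G p) x" for p
    by (simp add: lie_deriv_def beval_pair_def)
  have "quot_partial dZ n h k x * beval_pair F x + quot_partial dW n h k x * beval_pair G x
      = (beval_pair (lie_deriv F G n) x * beval_pair h x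
         - of_nat k * beval_pair n x * beval_pair (lie_deriv F G h) x) / beval_pair h x ^ Suc k"
    unfolding lie_at[symmetric] quot_partial_def using h by (simp add: field_simps)
  also have "\<dots> = (beval_pair K x - of_nat k * beval_pair L x) * (beval_pair n x / beval_pair h x ^ k)"
    using h by (simp add: n_cof h_cof beval_pair_def field_simps)
  finally show ?thesis .
qed

lemma quotient_lie_deriv_eq:
  assumes "beval h z w \<noteq> 0"
    and "lie_deriv F G n = K * n" and "lie_deriv F G h = L * h"
  shows "\<exists>a b. ((\<lambda>u. beval n u w / beval h u w ^ k) has_field_derivative a) (at z) \<and>
               ((\<lambda>v. beval n z v / beval h z v ^ k) has_field_derivative b) (at w) \<and>
               a * beval F z w + b * beval G z w
                 = (beval K z w - of_nat k * beval L z w) * (beval n z w / beval h z w ^ k)"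
proof (intro exI conjI)
  show "((\<lambda>u. beval n u w / beval h u w ^ k) has_field_derivative quot_partial dZ n h k (z, w)) (at z)"
    by (rule has_field_derivative_quotient_z[OF assms(1)])
  show "((\<lambda>v. beval n z v / beval h z v ^ k) has_field_derivative quot_partial dW n h k (z, w)) (at w)"
    by (rule has_field_derivative_quotient_w[OF assms(1)])
  show "quot_partial dZ n h k (z, w) * beval F z w + quot_partial dW n h k (z, w) * beval G z w
      = (beval K z w - of_nat k * beval L z w) * (beval n z w / beval h z w ^ k)"
    using lie_deriv_quotient[of h "(z, w)", OF _ assms(2,3)] assms(1) by simp
qed

lemma onorm_matrix2_le:
  fixes p q r s :: complex
  shows "onorm (\<lambda>v. (p * fst v + q * snd v, r * fst v + s * snd v)) \<le> norm p + norm q + norm r + norm s"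
proof (rule onorm_le)
  fix v :: "complex \<times> complex"
  have "norm (p * fst v + q * snd v, r * fst v + s * snd v)
        \<le> norm (p * fst v + q * snd v) + norm (r * fst v + s * snd v)"
    by (rule norm_Pair_le)
  also have "\<dots> \<le> (norm p * norm (fst v) + norm q * norm (snd v))
                  + (norm r * norm (fst v) + norm s * norm (snd v))"
    by (intro add_mono order_trans[OF norm_triangle_ineq]) (simp_all add: norm_mult)
  also have "\<dots> \<le> (norm p * norm v + norm q * norm v) + (norm r * norm v + norm s * norm v)"
    using norm_fst_le[of "fst v" "snd v"] norm_snd_le[of "snd v" "fst v"]
    by (intro add_mono mult_left_mono) auto
  finally show "norm (p * fst v + q * snd v, r * fst v + s * snd v)
                \<le> (norm p + norm q + norm r + norm s) * norm v"
    by (simp add: algebra_simps)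
qed

lemma locally_injective_jacobian:
  fixes f g A B C D :: "complex \<times> complex \<Rightarrow> complex"
  assumes "open S" "a \<in> S"
    and deriv: "\<And>x. x \<in> S \<Longrightarrow> ((\<lambda>x. (f x, g x)) has_derivative
                   (\<lambda>v. (A x * fst v + B x * snd v, C x * fst v + D x * snd v))) (at x)"
    and cont: "isCont A a" "isCont B a" "isCont C a" "isCont D a"
    and det: "A a * D a - B a * C a \<noteq> 0"
  obtains r where "r > 0" "ball a r \<subseteq> S" "inj_on (\<lambda>x. (f x, g x)) (ball a r)"
proof -
  define J where "J x v = (A x * fst v + B x * snd v, C x * fst v + D x * snd v)" for x v
  define \<delta> where "\<delta> = A a * D a - B a * C a"
  define J_inv where
    "J_inv v = ((D a * fst v - B a * snd v) / \<delta>, (A a * snd v - C a * fst v) / \<delta>)" for v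
  have "bounded_linear J_inv"
    unfolding J_inv_def
    by (auto intro!: bounded_linear_intros bounded_linear_compose[OF bounded_linear_divide])
  moreover have "J_inv \<circ> J a = id"
    using det by (auto simp: J_inv_def J_def \<delta>_def fun_eq_iff field_simps)
  moreover have "\<exists>d>0. \<forall>x. dist a x < d \<longrightarrow> onorm (\<lambda>v. J x v - J a v) < e" if "e > 0" for e
  proof -
    define dev where
      "dev x = norm (A x - A a) + norm (B x - B a) + norm (C x - C a) + norm (D x - D a)" for x
    have "isCont dev a"
      unfolding dev_def by (intro continuous_intros cont)
    then obtain d where "d > 0" and d: "\<And>x. dist x a < d \<Longrightarrow> dist (dev x) (dev a) < e"
      using \<open>e > 0\<close> unfolding continuous_at_eps_delta by blast
    have "onorm (\<lambda>v. J x v - J a v) < e" if "dist a x < d" for x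
    proof -
      have "(\<lambda>v. J x v - J a v) = (\<lambda>v. ((A x - A a) * fst v + (B x - B a) * snd v,
                                          (C x - C a) * fst v + (D x - D a) * snd v))"
        by (simp add: J_def fun_eq_iff algebra_simps)
      then have "onorm (\<lambda>v. J x v - J a v) \<le> dev x"
        using onorm_matrix2_le by (simp add: dev_def)
      also have "dev x < e"
        using d[of x] that by (simp add: dist_commute dev_def)
      finally show ?thesis .
    qed
    with \<open>d > 0\<close> show ?thesis by blast
  qed
  ultimately show ?thesis
    using has_derivative_locally_injective[OF \<open>a \<in> S\<close> \<open>open S\<close>, of J_inv J] deriv that
    unfolding J_def by blast
qed

lemma Z1_eq: "Z1 c z w = beval (l1 c * l3 c) z w / beval (l4 c) z w ^ 3"
  by (simp add: Z1_def)

lemma W1_eq: "W1 c z w = beval (l2 c * l3 c) z w / beval (l4 c) z w ^ 3"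
  by (simp add: W1_def)

lemma Z1_linearizes:
  assumes "beval (l4 c) z w \<noteq> 0"
  shows "\<exists>a b. ((\<lambda>u. Z1 c u w) has_field_derivative a) (at z) \<and>
               ((\<lambda>v. Z1 c z v) has_field_derivative b) (at w) \<and>
               a * beval (sysF c) z w + b * beval (sysG c) z w = Z1 c z w"
  using quotient_lie_deriv_eq[OF assms lie_deriv_l1_l3 lie_deriv_l4, of 3]
  unfolding Z1_eq by simp

lemma W1_linearizes:
  assumes "beval (l4 c) z w \<noteq> 0"
  shows "\<exists>a b. ((\<lambda>u. W1 c u w) has_field_derivative a) (at z) \<and>
               ((\<lambda>v. W1 c z v) has_field_derivative b) (at w) \<and>
               a * beval (sysF c) z w + b * beval (sysG c) z w = - W1 c z w"
  using quotient_lie_deriv_eq[OF assms lie_deriv_l2_l3 lie_deriv_l4, of 3]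
  unfolding W1_eq by simp

lemma linearizing_coordinates_locally_injective:
  "\<exists>U :: (complex \<times> complex) set. open U \<and> (0, 0) \<in> U \<and>
     (\<forall>(z, w) \<in> U. beval (l4 c) z w \<noteq> 0) \<and> inj_on (\<lambda>(z, w). (Z1 c z w, W1 c z w)) U"
proof -
  define S where "S = {x. beval_pair (l4 c) x \<noteq> 0}"
  define J where "J D n = quot_partial D n (l4 c) 3" for D n
  define n1 n2 where "n1 = l1 c * l3 c" and "n2 = l2 c * l3 c"
  have "open S"
    unfolding S_def by (intro open_Collect_neq continuous_on_const continuous_at_imp_continuous_on
        ballI isCont_beval_pair)
  have "(0, 0) \<in> S"
    by (simp add: S_def l4_def)
  have map_eq: "(\<lambda>(z, w). (Z1 c z w, W1 c z w))
      = (\<lambda>x. (beval_pair n1 x / beval_pair (l4 c) x ^ 3, beval_pair n2 x / beval_pair (l4 c) x ^ 3))"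
    by (auto simp: Z1_eq W1_eq beval_pair_def n1_def n2_def)
  have deriv: "((\<lambda>x. (beval_pair n1 x / beval_pair (l4 c) x ^ 3,
                      beval_pair n2 x / beval_pair (l4 c) x ^ 3)) has_derivative
         (\<lambda>v. (J dZ n1 x * fst v + J dW n1 x * snd v, J dZ n2 x * fst v + J dW n2 x * snd v))) (at x)"
    if "x \<in> S" for x
    using that unfolding S_def J_def by (intro has_derivative_Pair has_derivative_quotient) auto
  have cont: "isCont (J D n) (0, 0)" for D n
    unfolding J_def by (intro isCont_quot_partial) (simp add: l4_def)
  have "J dZ n1 (0, 0) = 1" "J dW n1 (0, 0) = 0" "J dZ n2 (0, 0) = 0" "J dW n2 (0, 0) = 1"
    by (simp_all add: J_def quot_partial_def n1_def n2_def l1_def l2_def l3_def l4_def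
        power2_eq_square)
  then have det: "J dZ n1 (0, 0) * J dW n2 (0, 0) - J dW n1 (0, 0) * J dZ n2 (0, 0) \<noteq> 0"
    by simp
  obtain r where "r > 0" "ball (0, 0) r \<subseteq> S"
    "inj_on (\<lambda>(z, w). (Z1 c z w, W1 c z w)) (ball (0, 0) r)"
    using locally_injective_jacobian[OF \<open>open S\<close> \<open>(0, 0) \<in> S\<close> deriv cont cont cont cont det]
    unfolding map_eq by blast
  then show ?thesis
    by (intro exI[of _ "ball (0, 0) r"]) (auto simp: S_def)
qed

theorem mainTheorem4:
  fixes c :: complex
  shows "darboux_factor (sysF c) (sysG c) (l1 c) \<and>
         darboux_factor (sysF c) (sysG c) (l2 c) \<and>
         darboux_factor (sysF c) (sysG c) (l3 c) \<and>
         darboux_factor (sysF c) (sysG c) (l4 c) \<and>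
         (\<exists>U :: (complex \<times> complex) set. open U \<and> (0, 0) \<in> U \<and>
            (\<forall>(z, w) \<in> U. beval (l4 c) z w \<noteq> 0) \<and>
            inj_on (\<lambda>(z, w). (Z1 c z w, W1 c z w)) U \<and>
            (\<forall>(z, w) \<in> U.
               (\<exists>a b. ((\<lambda>u. Z1 c u w) has_field_derivative a) (at z) \<and>
                      ((\<lambda>v. Z1 c z v) has_field_derivative b) (at w) \<and>
                      a * beval (sysF c) z w + b * beval (sysG c) z w = Z1 c z w) \<and>
               (\<exists>a b. ((\<lambda>u. W1 c u w) has_field_derivative a) (at z) \<and>
                      ((\<lambda>v. W1 c z v) has_field_derivative b) (at w) \<and>
                      a * beval (sysF c) z w + b * beval (sysG c) z w = - W1 c z w)))"
proof -
  obtain U :: "(complex \<times> complex) set" where U: "open U" "(0, 0) \<in> U"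
      "\<forall>(z, w) \<in> U. beval (l4 c) z w \<noteq> 0" "inj_on (\<lambda>(z, w). (Z1 c z w, W1 c z w)) U"
    using linearizing_coordinates_locally_injective by blast
  have l4_nonzero: "beval (l4 c) z w \<noteq> 0" if "(z, w) \<in> U" for z w
    using U(3) that by auto
  show ?thesis
    by (intro conjI exI[of _ U] U ballI darboux_factorI[OF lie_deriv_l1]
        darboux_factorI[OF lie_deriv_l2] darboux_factorI[OF lie_deriv_l3]
        darboux_factorI[OF lie_deriv_l4])
      (clarify; intro conjI Z1_linearizes W1_linearizes l4_nonzero; assumption)
qed

end
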